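(* Consider the $(n,t_e,\lambda)$-full-access setting with $\lambda=\infty$ (Eve never switches the paths she accesses once chosen). Let $r=n-t_e$. For every integer $u>\log(2n-t_e)$ there is a one-round $(ur,\,un,\,0,\,0)$-PMT protocol over this setting; these protocols (indexed by $u$) form a P-PMT family with secrecy rate $R=1-\frac{t_e}{n}$.
   Context: Multipath setting: an $(n,t_a,t_b,t_e,\lambda)$-multipath setting ($0\le t_a,t_b,t_e\le n$) has a sender Alice, a receiver Bob and a passive, computationally unbounded eavesdropper Eve, connected by $n$ disjoint paths; Alice and Bob share no key. At any time Alice, Bob and Eve access at most $t_a,t_b,t_e$ paths respectively. Time is divided into intervals, each corresponding to sending $\lambda$ consecutive bits over a path; at the start of each interval every party (Eve included, adaptively) chooses its accessed paths and keeps them for the whole interval. Anything sent over a path is seen by all parties accessing that path in that interval; Eve's view is everything sent over her accessed paths. The case $t_a=t_b=n$ is called the $(n,t_e,\lambda)$-full-access setting. PMT protocol: a protocol is a $(k,c,\delta,\epsilon)$-PMT protocol if it transmits any message $S\in\{0,1\}^k$ from Alice to Bob using a total of $c$ communicated bits, with Bob outputting $\hat S$, such that $\Pr(\hat S\neq s)\le\delta$ for all $s\in\{0,1\}^k$ and $SD(View_E(s_1),View_E(s_2))\le\epsilon$ for all $s_1,s_2\in\{0,1\}^k$, where $View_E(s)$ is Eve's view when $s$ is sent (for any Eve strategy) and $SD(X,Y)=\frac12\sum_x|\Pr(X=x)-\Pr(Y=x)|$. Its secrecy rate is $k/c$. P-PMT family: a sequence $(\Pi_i)_{i\in\mathbb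 N}$ of $(k_i,c_i,0,0)$-PMT protocols with $k_{i+1}>k_i$; its P-secrecy rate is $\inf_i k_i/c_i$. Logarithms are base 2. *)

theory Defs
  imports "HOL-Probability.Probability"
begin

text \<open>Paths are numbered 0..n-1.  A transcript assigns to every path the bit
  string sent over it (paths with index at least n carry nothing).  Alice's
  (randomised) encoder maps a message to a distribution of transcripts; Bob's
  (possibly randomised) decoder sees all paths (t_b = n).\<close>

type_synonym transcript = "nat \<Rightarrow> bool list"
type_synonym protocol =
  "(bool list \<Rightarrow> transcript pmf) \<times> (transcript \<Rightarrow> bool list pmf)"

definition SD :: "'a pmf \<Rightarrow> 'a pmf \<Rightarrow> real" where
  "SD p q = (\<Sum>\<^sub>\<infinity>x. \<bar>pmf p x - pmf q x\<bar>) / 2"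

text \<open>Eve's view when she accesses the set E of paths for the whole (infinite)
  interval: everything sent on those paths.\<close>
definition eve_view :: "nat set \<Rightarrow> transcript \<Rightarrow> transcript" where
  "eve_view E x = (\<lambda>i. if i \<in> E then x i else [])"

definition one_round_PMT ::
  "nat \<Rightarrow> nat \<Rightarrow> nat \<Rightarrow> nat \<Rightarrow> real \<Rightarrow> real \<Rightarrow> protocol \<Rightarrow> bool" where
  "one_round_PMT n te k c \<delta> \<epsilon> P \<longleftrightarrow>
     (let enc = fst P; dec = snd P in
      \<comment> \<open>well-formed transcripts using exactly c communicated bits over the n paths\<close>
      (\<forall>s. length s = k \<longrightarrow> (\<forall>x \<in> set_pmf (enc s).
           (\<forall>i\<ge>n. x i = []) \<and> (\<Sum>i<n. length (x i)) = c)) \<and>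
      \<comment> \<open>reliability\<close>
      (\<forall>s. length s = k \<longrightarrow>
           measure_pmf.prob (bind_pmf (enc s) dec) {s'. s' \<noteq> s} \<le> \<delta>) \<and>
      \<comment> \<open>secrecy against every choice of at most t_e paths\<close>
      (\<forall>s1 s2 E. length s1 = k \<longrightarrow> length s2 = k \<longrightarrow> E \<subseteq> {..<n} \<longrightarrow> card E \<le> te \<longrightarrow>
           SD (map_pmf (eve_view E) (enc s1)) (map_pmf (eve_view E) (enc s2)) \<le> \<epsilon>))"

definition P_PMT_family ::
  "nat \<Rightarrow> nat \<Rightarrow> (nat \<Rightarrow> protocol) \<Rightarrow> (nat \<Rightarrow> nat) \<Rightarrow> (nat \<Rightarrow> nat) \<Rightarrow> bool" where
  "P_PMT_family n te Prot k c \<longleftrightarrow>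
     (\<forall>i. one_round_PMT n te (k i) (c i) 0 0 (Prot i)) \<and> (\<forall>i. k i < k (Suc i))"

definition P_secrecy_rate :: "(nat \<Rightarrow> nat) \<Rightarrow> (nat \<Rightarrow> nat) \<Rightarrow> real" where
  "P_secrecy_rate k c = (INF i. real (k i) / real (c i))"

end

theory Submission
  imports Defs "HOL-Algebra.Algebraic_Closure_Type" "HOL-Library.Z2"
begin

text \<open>Alice splits the message into n - te blocks of u bits, read as elements of the field
  GF(2^u), and takes the polynomial whose te lowest coefficients are uniformly random pads and
  whose remaining coefficients are the blocks; path i carries its value at the i-th of n distinct
  field points.  Bob sees all n values and interpolates.  For any te paths, the values of the
  pad polynomial at the te corresponding points determine the pads, so Eve's view is a
  bijective image of the uniform pads shifted by a message-dependent term, hence uniform for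
  every message.  GF(2^u) is realised as the fixed points of x \<mapsto> x^(2^u) in the algebraic
  closure of GF(2), which has exactly 2^u elements since x^(2^u) - x has derivative -1; and
  u > log(2n - te) guarantees n \<le> 2^u.\<close>

section \<open>The field with 2^u elements\<close>

lemma power_two_power_add_CHAR_2:
  fixes x y :: "'a :: comm_ring_1"
  assumes "CHAR('a) = 2"
  shows "(x + y) ^ 2 ^ u = x ^ 2 ^ u + y ^ 2 ^ u"
proof (induction u)
  case (Suc u)
  have two: "(2 :: 'a) = 0"
    using of_nat_CHAR[where 'a = 'a] assms by simp
  have "(x + y) ^ 2 ^ Suc u = ((x + y) ^ 2 ^ u) ^ 2"
    by (simp add: power_mult[symmetric] mult.commute)
  also have "\<dots> = (x ^ 2 ^ u) ^ 2 + (y ^ 2 ^ u) ^ 2"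
    by (simp add: Suc power2_sum two)
  also have "\<dots> = x ^ 2 ^ Suc u + y ^ 2 ^ Suc u"
    by (simp add: power_mult[symmetric] mult.commute)
  finally show ?case .
qed simp

definition frob_fixpoints :: "nat \<Rightarrow> 'a :: comm_ring_1 set" where
  "frob_fixpoints u = {x. x ^ 2 ^ u = x}"

lemma zero_in_frob_fixpoints: "0 \<in> frob_fixpoints u"
  by (simp add: frob_fixpoints_def power_0_left)

lemma add_in_frob_fixpoints:
  fixes x y :: "'a :: comm_ring_1"
  assumes "CHAR('a) = 2" "x \<in> frob_fixpoints u" "y \<in> frob_fixpoints u"
  shows "x + y \<in> frob_fixpoints u"
  using assms by (simp add: frob_fixpoints_def power_two_power_add_CHAR_2)

lemma mult_in_frob_fixpoints:
  "x \<in> frob_fixpoints u \<Longrightarrow> y \<in> frob_fixpoints u \<Longrightarrow> x * y \<in> frob_fixpoints u"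
  by (simp add: frob_fixpoints_def power_mult_distrib)

lemma card_roots_eq_degree_if_separable:
  fixes p :: "'a :: alg_closed_field poly"
  assumes "p \<noteq> 0" and separable: "\<And>x. poly p x = 0 \<Longrightarrow> poly (pderiv p) x \<noteq> 0"
  shows "card {x. poly p x = 0} = Polynomial.degree p"
proof -
  obtain A where size_A: "size A = Polynomial.degree p"
    and "p = Polynomial.smult (Polynomial.lead_coeff p) (\<Prod>x\<in>#A. [:-x, 1:])"
    using alg_closed_imp_factorization[OF \<open>p \<noteq> 0\<close>] by blast
  then obtain c where "c \<noteq> 0" and p_eq: "p = Polynomial.smult c (\<Prod>x\<in>#A. [:-x, 1:])"
    using \<open>p \<noteq> 0\<close> by (metis leading_coeff_0_iff)
  have roots: "{x. poly p x = 0} = set_mset A"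
    using \<open>c \<noteq> 0\<close> by (auto simp: p_eq poly_prod_mset prod_mset_zero_iff)
  have count_le_1: "count A a \<le> 1" for a
  proof (rule ccontr)
    assume "\<not> count A a \<le> 1"
    hence "a \<in># A" "a \<in># A - {#a#}"
      by (auto simp: in_diff_count not_less_eq_eq simp flip: count_greater_zero_iff)
    then obtain B where "A = add_mset a (add_mset a B)"
      by (metis insert_DiffM)
    moreover define h where "h = [:-a, 1:]"
    ultimately have p_sq: "p = h * (h * Polynomial.smult c (\<Prod>x\<in>#B. [:-x, 1:]))"
      by (simp add: p_eq mult_smult_right)
    have "poly h a = 0"
      by (simp add: h_def)
    hence "poly p a = 0" "poly (pderiv p) a = 0"
      unfolding p_sq by (simp_all add: pderiv_mult pderiv_smult)
    thus False
      using separable by blast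
  qed
  have "A = mset_set (set_mset A)"
  proof (rule multiset_eqI)
    fix x
    show "count A x = count (mset_set (set_mset A)) x"
      using count_le_1[of x]
      by (cases "x \<in># A") (auto simp: not_in_iff simp flip: count_greater_zero_iff)
  qed
  hence "card (set_mset A) = size A"
    by (metis size_mset_set)
  thus ?thesis
    using roots size_A by simp
qed

lemma card_frob_fixpoints:
  assumes "CHAR('a :: alg_closed_field) = 2" "0 < u"
  shows "card (frob_fixpoints u :: 'a set) = 2 ^ u"
proof -
  define q :: nat where "q = 2 ^ u"
  have "q \<ge> 2"
    using assms(2) by (cases u) (simp_all add: q_def)
  define p :: "'a poly" where "p = Polynomial.monom 1 q - [:0, 1:]"
  have "Polynomial.coeff p q = 1"
    using \<open>q \<ge> 2\<close> by (simp add: p_def coeff_pCons split: nat.split)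
  moreover have "Polynomial.degree p \<le> q"
    using \<open>q \<ge> 2\<close> unfolding p_def by (intro degree_diff_le) (auto simp: degree_monom_le)
  ultimately have deg: "Polynomial.degree p = q"
    by (metis le_antisym le_degree zero_neq_one)
  have "(2 :: 'a) = 0"
    using of_nat_CHAR[where 'a = 'a] assms(1) by simp
  hence "(of_nat q :: 'a) = 0"
    using assms(2) by (cases u) (simp_all add: q_def)
  hence "pderiv p = -1"
    by (simp add: p_def pderiv_diff pderiv_monom pderiv_pCons one_pCons)
  hence "card {x. poly p x = 0} = q"
    using deg \<open>q \<ge> 2\<close> by (subst card_roots_eq_degree_if_separable) auto
  thus ?thesis
    by (simp add: frob_fixpoints_def p_def poly_monom q_def)
qed

lemma CHAR_bit_alg_closure: "CHAR(bit alg_closure) = 2"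
proof -
  have "CHAR(bit) = 2"
    by (rule CHAR_eq_posI) (auto simp: less_2_cases_iff)
  thus ?thesis
    by simp
qed

section \<open>Coefficient lists and interpolation\<close>

lemma degree_Poly_less_length: "xs \<noteq> [] \<Longrightarrow> Polynomial.degree (Poly xs) < length xs"
proof -
  assume "xs \<noteq> []"
  have "Polynomial.degree (Poly xs) \<le> length xs - 1"
    by (intro degree_le) (auto simp: nth_default_def)
  thus ?thesis
    using \<open>xs \<noteq> []\<close> by (cases xs) auto
qed

lemma Poly_eqD_same_length:
  assumes "length xs = length ys" "Poly xs = Poly ys"
  shows "xs = ys"
proof (rule nth_equalityI)
  fix i
  assume "i < length xs"
  thus "xs ! i = ys ! i"
    using arg_cong[OF assms(2), of "\<lambda>p. Polynomial.coeff p i"] assms(1)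
    by (simp add: nth_default_def)
qed (fact assms(1))

lemma coeff_list_eqI_poly:
  fixes xs ys :: "'a :: idom list"
  assumes "length xs = length ys" "length xs \<le> card A"
    and "\<And>x. x \<in> A \<Longrightarrow> poly (Poly xs) x = poly (Poly ys) x"
  shows "xs = ys"
proof (cases "xs = []")
  case False
  moreover have "ys \<noteq> []"
    using False assms(1) by auto
  ultimately have "Poly xs = Poly ys"
    using assms degree_Poly_less_length[of xs] degree_Poly_less_length[of ys]
    by (intro poly_eqI_degree[of A]) auto
  thus ?thesis
    by (rule Poly_eqD_same_length[OF assms(1)])
qed (use assms(1) in simp)

lemma poly_Poly_append:
  fixes xs ys :: "'a :: comm_semiring_1 list"
  shows "poly (Poly (xs @ ys)) x = poly (Poly xs) x + x ^ length xs * poly (Poly ys) x"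
  by (simp add: Poly_append Polynomial.poly_monom)

section \<open>Ramp secret sharing over the n paths\<close>

lemma concat_chunks_eq_take:
  "concat (map (\<lambda>j. take u (drop (j * u) s)) [0..<m]) = take (m * u) s"
proof (induction m)
  case (Suc m)
  have "take (Suc m * u) s = take (m * u + u) s"
    by (simp add: add.commute)
  also have "\<dots> = take (m * u) s @ take u (drop (m * u) s)"
    by (rule take_add)
  finally show ?case
    using Suc by simp
qed simp

lemma eve_view_eve_view_subset: "E \<subseteq> E' \<Longrightarrow> eve_view E (eve_view E' x) = eve_view E x"
  by (auto simp: eve_view_def fun_eq_iff)

lemma SD_self [simp]: "SD p p = 0"
  by (simp add: SD_def)

locale ramp_sharing =
  fixes F :: "'a :: idom set" and bits :: "'a \<Rightarrow> bool list" and \<alpha> :: "nat \<Rightarrow> 'a"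
    and n te u :: nat
  assumes zero_in: "0 \<in> F"
    and add_in: "x \<in> F \<Longrightarrow> y \<in> F \<Longrightarrow> x + y \<in> F"
    and mult_in: "x \<in> F \<Longrightarrow> y \<in> F \<Longrightarrow> x * y \<in> F"
    and bij_bits: "bij_betw bits F {w. length w = u}"
    and points_in: "i < n \<Longrightarrow> \<alpha> i \<in> F"
    and inj_points: "inj_on \<alpha> {..<n}"
    and te_le_n: "te \<le> n"
begin

definition of_bits :: "bool list \<Rightarrow> 'a" where
  "of_bits = inv_into F bits"

lemma of_bits_in: "length w = u \<Longrightarrow> of_bits w \<in> F"
  using bij_bits by (auto simp: of_bits_def bij_betw_def intro: inv_into_into)

lemma bits_of_bits: "length w = u \<Longrightarrow> bits (of_bits w) = w"
  using bij_bits by (auto simp: of_bits_def bij_betw_def intro: f_inv_into_f)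

lemma of_bits_bits: "x \<in> F \<Longrightarrow> of_bits (bits x) = x"
  using bij_bits by (simp add: of_bits_def bij_betw_def)

lemma bits_eqD: "x \<in> F \<Longrightarrow> y \<in> F \<Longrightarrow> bits x = bits y \<Longrightarrow> x = y"
  using bij_bits by (auto simp: bij_betw_def dest: inj_onD)

lemma length_bits: "x \<in> F \<Longrightarrow> length (bits x) = u"
  using bij_bits by (auto simp: bij_betw_def)

lemma poly_Poly_in: "set cs \<subseteq> F \<Longrightarrow> a \<in> F \<Longrightarrow> poly (Poly cs) a \<in> F"
  by (induction cs) (auto intro: zero_in add_in mult_in)

lemma card_points: "A \<subseteq> {..<n} \<Longrightarrow> card (\<alpha> ` A) = card A"
  using inj_points by (intro card_image) (auto intro: inj_on_subset)

definition blocks :: "bool list \<Rightarrow> bool list list" where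
  "blocks s = map (\<lambda>j. take u (drop (j * u) s)) [0..<n - te]"

lemma length_blocks: "length (blocks s) = n - te"
  by (simp add: blocks_def)

lemma length_in_blocks:
  assumes "length s = u * (n - te)" "w \<in> set (blocks s)"
  shows "length w = u"
proof -
  obtain j where "j < n - te" "w = take u (drop (j * u) s)"
    using assms(2) by (auto simp: blocks_def)
  moreover have "j * u + u \<le> u * (n - te)"
    using \<open>j < n - te\<close> by (metis add.commute mult.commute mult_Suc_right mult_le_mono2 Suc_leI)
  ultimately show ?thesis
    using assms(1) by simp
qed

lemma concat_blocks_eq: "length s = u * (n - te) \<Longrightarrow> concat (blocks s) = s"
  by (simp add: blocks_def concat_chunks_eq_take mult.commute)

definition share_coeffs :: "'a list \<Rightarrow> bool list \<Rightarrow> 'a list" where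
  "share_coeffs rs s = rs @ map of_bits (blocks s)"

definition shares :: "'a list \<Rightarrow> transcript" where
  "shares cs = (\<lambda>i. if i < n then bits (poly (Poly cs) (\<alpha> i)) else [])"

definition pads :: "'a list set" where
  "pads = {rs. set rs \<subseteq> F \<and> length rs = te}"

lemma finite_F: "finite F"
  using bij_betw_finite[OF bij_bits] finite_lists_length_eq[of "UNIV :: bool set" u] by simp

lemma finite_pads: "finite pads"
  unfolding pads_def using finite_F by (rule finite_lists_length_eq)

lemma pads_nonempty: "pads \<noteq> {}"
proof -
  have "replicate te 0 \<in> pads"
    by (auto simp: pads_def zero_in)
  thus ?thesis
    by blast
qed

lemma share_coeffs_in:
  "length s = u * (n - te) \<Longrightarrow> rs \<in> pads \<Longrightarrow> set (share_coeffs rs s) \<subseteq> F"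
  by (auto simp: share_coeffs_def pads_def intro: of_bits_in length_in_blocks)

lemma length_share_coeffs: "rs \<in> pads \<Longrightarrow> length (share_coeffs rs s) = n"
  using te_le_n by (simp add: share_coeffs_def pads_def length_blocks)

definition encoder :: "bool list \<Rightarrow> transcript pmf" where
  "encoder s = map_pmf (\<lambda>rs. shares (share_coeffs rs s)) (pmf_of_set pads)"

definition interpolate :: "transcript \<Rightarrow> 'a list" where
  "interpolate x = (THE cs. length cs = n \<and> (\<forall>i<n. poly (Poly cs) (\<alpha> i) = of_bits (x i)))"

definition decoder :: "transcript \<Rightarrow> bool list pmf" where
  "decoder x = return_pmf (concat (map bits (drop te (interpolate x))))"

lemma interpolate_shares:
  assumes "set cs \<subseteq> F" "length cs = n"
  shows "interpolate (shares cs) = cs"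
  unfolding interpolate_def
proof (rule the_equality)
  show "length cs = n \<and> (\<forall>i<n. poly (Poly cs) (\<alpha> i) = of_bits (shares cs i))"
    using assms by (simp add: shares_def of_bits_bits poly_Poly_in points_in)
next
  fix cs'
  assume cs': "length cs' = n \<and> (\<forall>i<n. poly (Poly cs') (\<alpha> i) = of_bits (shares cs i))"
  show "cs' = cs"
  proof (rule coeff_list_eqI_poly[of _ _ "\<alpha> ` {..<n}"])
    show "length cs' \<le> card (\<alpha> ` {..<n})"
      using cs' card_points[of "{..<n}"] by simp
    show "poly (Poly cs') x = poly (Poly cs) x" if "x \<in> \<alpha> ` {..<n}" for x
      using that cs' assms by (auto simp: shares_def of_bits_bits poly_Poly_in points_in)
  qed (use cs' assms in simp)
qed

lemma decoder_shares:
  assumes "length s = u * (n - te)" "rs \<in> pads"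
  shows "decoder (shares (share_coeffs rs s)) = return_pmf s"
proof -
  have "interpolate (shares (share_coeffs rs s)) = share_coeffs rs s"
    using assms by (intro interpolate_shares share_coeffs_in length_share_coeffs)
  moreover have "map bits (map of_bits (blocks s)) = blocks s"
    unfolding map_map using assms(1) by (intro map_idI) (simp add: bits_of_bits length_in_blocks)
  ultimately show ?thesis
    using assms by (simp add: decoder_def share_coeffs_def pads_def concat_blocks_eq)
qed

lemma bind_encoder_decoder:
  assumes "length s = u * (n - te)"
  shows "bind_pmf (encoder s) decoder = return_pmf s"
proof -
  have "bind_pmf (encoder s) decoder =
      bind_pmf (pmf_of_set pads) (\<lambda>rs. decoder (shares (share_coeffs rs s)))"
    by (simp add: encoder_def bind_map_pmf)
  also have "\<dots> = bind_pmf (pmf_of_set pads) (\<lambda>_. return_pmf s)"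
    using finite_pads pads_nonempty assms by (intro bind_pmf_cong) (simp_all add: decoder_shares)
  finally show ?thesis
    by simp
qed

lemma card_pads: "card pads = card F ^ te"
  unfolding pads_def using finite_F by (rule card_lists_length_eq)

lemma inj_on_pads_view:
  assumes s: "length s = u * (n - te)" and E: "E \<subseteq> {..<n}" "card E = te"
  shows "inj_on (\<lambda>rs. eve_view E (shares (share_coeffs rs s))) pads"
proof (rule inj_onI)
  fix rs rs'
  assume rs: "rs \<in> pads" and rs': "rs' \<in> pads"
    and eq: "eve_view E (shares (share_coeffs rs s)) = eve_view E (shares (share_coeffs rs' s))"
  have "poly (Poly rs) x = poly (Poly rs') x" if x: "x \<in> \<alpha> ` E" for x
  proof -
    obtain i where i: "i \<in> E" "x = \<alpha> i"
      using x by blast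
    have "i < n"
      using i E(1) by blast
    have "bits (poly (Poly (share_coeffs rs s)) x) = bits (poly (Poly (share_coeffs rs' s)) x)"
      using fun_cong[OF eq, of i] i \<open>i < n\<close> by (simp add: eve_view_def shares_def)
    hence "poly (Poly (share_coeffs rs s)) x = poly (Poly (share_coeffs rs' s)) x"
      using share_coeffs_in[OF s rs] share_coeffs_in[OF s rs'] points_in[OF \<open>i < n\<close>] i
      by (intro bits_eqD poly_Poly_in) simp_all
    thus ?thesis
      using rs rs' by (simp add: share_coeffs_def poly_Poly_append pads_def)
  qed
  thus "rs = rs'"
    using rs rs' card_points[OF E(1)] E(2) by (intro coeff_list_eqI_poly) (auto simp: pads_def)
qed

lemma bij_betw_pads_view:
  assumes s: "length s = u * (n - te)" and E: "E \<subseteq> {..<n}" "card E = te"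
  shows "bij_betw (\<lambda>rs. eve_view E (shares (share_coeffs rs s))) pads
    (PiE_dflt E [] (\<lambda>_. {w. length w = u}))" (is "bij_betw ?view pads ?B")
proof (rule bij_betw_imageI)
  show inj: "inj_on ?view pads"
    using assms by (rule inj_on_pads_view)
  have finite_E: "finite E"
    using E(1) finite_subset by blast
  have "?view ` pads \<subseteq> ?B"
    using share_coeffs_in[OF s] E(1)
    by (auto simp: PiE_dflt_def eve_view_def shares_def length_bits poly_Poly_in points_in)
  moreover have "card ?B = card (?view ` pads)"
  proof -
    have "card ?B = card {w :: bool list. length w = u} ^ te"
      using finite_E E(2) finite_lists_length_eq[of "UNIV :: bool set" u]
      by (simp add: card_PiE_dflt)
    also have "\<dots> = card pads"
      using card_pads bij_betw_same_card[OF bij_bits] by simp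
    finally show ?thesis
      using card_image[OF inj] by simp
  qed
  moreover have "finite ?B"
    using finite_E finite_lists_length_eq[of "UNIV :: bool set" u] by auto
  ultimately show "?view ` pads = ?B"
    by (intro card_subset_eq) auto
qed

lemma eve_view_encoder_full:
  assumes "length s = u * (n - te)" "E \<subseteq> {..<n}" "card E = te"
  shows "map_pmf (eve_view E) (encoder s) = pmf_of_set (PiE_dflt E [] (\<lambda>_. {w. length w = u}))"
  using map_pmf_of_set_bij_betw[OF bij_betw_pads_view[OF assms] pads_nonempty finite_pads]
  by (simp add: encoder_def map_pmf_comp)

lemma eve_view_encoder_indep:
  assumes "length s1 = u * (n - te)" "length s2 = u * (n - te)"
    and "E \<subseteq> {..<n}" "card E \<le> te"
  shows "map_pmf (eve_view E) (encoder s1) = map_pmf (eve_view E) (encoder s2)"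
proof -
  obtain E' where "E \<subseteq> E'" "E' \<subseteq> {..<n}" "card E' = te"
    using exists_subset_between[OF assms(4) _ assms(3)] te_le_n by auto
  have "map_pmf (eve_view E) (encoder s) =
      map_pmf (eve_view E) (pmf_of_set (PiE_dflt E' [] (\<lambda>_. {w. length w = u})))"
    if "length s = u * (n - te)" for s
  proof -
    have "map_pmf (eve_view E) (encoder s) =
        map_pmf (eve_view E) (map_pmf (eve_view E') (encoder s))"
      using \<open>E \<subseteq> E'\<close> by (simp add: map_pmf_comp eve_view_eve_view_subset)
    thus ?thesis
      using eve_view_encoder_full[OF that \<open>E' \<subseteq> {..<n}\<close> \<open>card E' = te\<close>] by simp
  qed
  thus ?thesis
    using assms(1,2) by simp
qed

lemma encoder_transcripts:
  assumes "length s = u * (n - te)" "x \<in> set_pmf (encoder s)"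
  shows "(\<forall>i\<ge>n. x i = []) \<and> (\<Sum>i<n. length (x i)) = u * n"
proof -
  obtain rs where rs: "rs \<in> pads" "x = shares (share_coeffs rs s)"
    using assms(2) finite_pads pads_nonempty by (auto simp: encoder_def)
  have "length (x i) = u" if "i < n" for i
    using that rs share_coeffs_in[OF assms(1) rs(1)]
    by (simp add: shares_def length_bits poly_Poly_in points_in)
  thus ?thesis
    using rs(2) by (simp add: shares_def)
qed

theorem one_round_PMT_encoder_decoder:
  "one_round_PMT n te (u * (n - te)) (u * n) 0 0 (encoder, decoder)"
  unfolding one_round_PMT_def Let_def fst_conv snd_conv
proof (intro conjI allI impI ballI)
  fix s1 s2 :: "bool list" and E :: "nat set"
  assume "length s1 = u * (n - te)" "length s2 = u * (n - te)" "E \<subseteq> {..<n}" "card E \<le> te"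
  hence "map_pmf (eve_view E) (encoder s1) = map_pmf (eve_view E) (encoder s2)"
    by (rule eve_view_encoder_indep)
  thus "SD (map_pmf (eve_view E) (encoder s1)) (map_pmf (eve_view E) (encoder s2)) \<le> 0"
    by simp
qed (simp_all add: encoder_transcripts bind_encoder_decoder)

end

lemma one_round_PMT_exists:
  assumes "te \<le> n" "0 < u" "n \<le> 2 ^ u"
  shows "\<exists>P. one_round_PMT n te (u * (n - te)) (u * n) 0 0 P"
proof -
  define F :: "bit alg_closure set" where "F = frob_fixpoints u"
  have card_F: "card F = 2 ^ u"
    unfolding F_def using CHAR_bit_alg_closure assms(2) by (rule card_frob_fixpoints)
  hence "finite F"
    by (intro card_ge_0_finite) simp
  have "\<exists>bits. bij_betw bits F {w :: bool list. length w = u}"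
  proof (rule finite_same_card_bij)
    show "finite {w :: bool list. length w = u}"
      using finite_lists_length_eq[of "UNIV :: bool set" u] by simp
    show "card F = card {w :: bool list. length w = u}"
      using card_lists_length_eq[of "UNIV :: bool set" u] card_F by simp
  qed fact
  then obtain bits where bits: "bij_betw bits F {w :: bool list. length w = u}"
    by blast
  obtain \<alpha> where \<alpha>: "bij_betw \<alpha> {0..<card F} F"
    using ex_bij_betw_nat_finite[OF \<open>finite F\<close>] by blast
  have "{..<n} \<subseteq> {0..<card F}"
    using assms(3) card_F by auto
  hence points_in: "\<alpha> i \<in> F" if "i < n" for i
    using \<alpha> that by (auto simp: bij_betw_def)
  have inj_points: "inj_on \<alpha> {..<n}"
    using \<alpha> \<open>{..<n} \<subseteq> _\<close> by (auto simp: bij_betw_def intro: inj_on_subset)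
  interpret ramp_sharing F bits \<alpha> n te u
  proof
    show "0 \<in> F"
      unfolding F_def by (rule zero_in_frob_fixpoints)
    show "x + y \<in> F" if "x \<in> F" "y \<in> F" for x y
      using CHAR_bit_alg_closure that unfolding F_def by (rule add_in_frob_fixpoints)
    show "x * y \<in> F" if "x \<in> F" "y \<in> F" for x y
      using that unfolding F_def by (rule mult_in_frob_fixpoints)
  qed (fact assms(1) bits points_in inj_points)+
  show ?thesis
    using one_round_PMT_encoder_decoder by blast
qed

lemma log_less_imp_bounds:
  fixes n te u :: nat
  assumes "0 < n" "te \<le> n" "log 2 (real (2 * n - te)) < real u"
  shows "0 < u" "n \<le> 2 ^ u"
proof -
  have "1 \<le> real (2 * n - te)"
    using assms(1,2) by simp
  hence "0 \<le> log 2 (real (2 * n - te))"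
    by simp
  thus "0 < u"
    using assms(3) by linarith
  have "real (2 * n - te) < 2 ^ u"
    using assms(3) \<open>1 \<le> _\<close> by (simp add: log_less_iff powr_realpow)
  hence "2 * n - te < 2 ^ u"
    by (metis of_nat_less_numeral_power_cancel_iff)
  thus "n \<le> 2 ^ u"
    using assms(2) by linarith
qed

lemma P_secrecy_rate_scaled:
  assumes "\<And>i. 0 < f i"
  shows "P_secrecy_rate (\<lambda>i. f i * a) (\<lambda>i. f i * b) = real a / real b"
proof -
  have "real (f i * a) / real (f i * b) = real a / real b" for i
    using assms[of i] by simp
  thus ?thesis
    by (simp add: P_secrecy_rate_def)
qed

theorem theorem1:
  fixes n te :: nat
  assumes "0 < n" and "te \<le> n"
  shows "\<exists>Prot :: nat \<Rightarrow> protocol.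
     (\<forall>u::nat. real u > log 2 (real (2 * n - te)) \<longrightarrow>
        one_round_PMT n te (u * (n - te)) (u * n) 0 0 (Prot u)) \<and>
     (te < n \<longrightarrow>
        (let u0 = (LEAST u::nat. real u > log 2 (real (2 * n - te))) in
           P_PMT_family n te (\<lambda>i. Prot (u0 + i))
             (\<lambda>i. (u0 + i) * (n - te)) (\<lambda>i. (u0 + i) * n) \<and>
           P_secrecy_rate (\<lambda>i. (u0 + i) * (n - te)) (\<lambda>i. (u0 + i) * n)
             = 1 - real te / real n))"
proof -
  let ?admissible = "\<lambda>u::nat. real u > log 2 (real (2 * n - te))"
  define Prot where "Prot u = (SOME P. one_round_PMT n te (u * (n - te)) (u * n) 0 0 P)" for u
  have Prot: "one_round_PMT n te (u * (n - te)) (u * n) 0 0 (Prot u)" if "?admissible u" for u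
    using one_round_PMT_exists[OF assms(2) log_less_imp_bounds[OF assms that]]
    unfolding Prot_def by (rule someI_ex)
  define u0 where "u0 = (LEAST u. ?admissible u)"
  have "?admissible u0"
    unfolding u0_def by (rule LeastI_ex) (use reals_Archimedean2 in blast)
  hence admissible: "?admissible (u0 + i)" for i
    by simp
  have "0 < u0"
    using log_less_imp_bounds(1)[OF assms \<open>?admissible u0\<close>] .
  have "P_PMT_family n te (\<lambda>i. Prot (u0 + i)) (\<lambda>i. (u0 + i) * (n - te)) (\<lambda>i. (u0 + i) * n)"
    if "te < n"
    unfolding P_PMT_family_def using Prot[OF admissible] that by simp linarith
  moreover have "P_secrecy_rate (\<lambda>i. (u0 + i) * (n - te)) (\<lambda>i. (u0 + i) * n)
      = 1 - real te / real n"
    using P_secrecy_rate_scaled[of "\<lambda>i. u0 + i" "n - te" n] \<open>0 < u0\<close> assms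
    by (simp add: of_nat_diff field_simps)
  ultimately show ?thesis
    using Prot unfolding u0_def Let_def by blast
qed

end
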